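(* Let $G$ be a finite abelian group and $H$ a proper subgroup of $G$. Let $\mathcal P=P_0\mid P_1\mid\cdots\mid P_M$ be a partition of $H$, and let its dual partition (a partition of $\widehat H$) be $\widehat{\mathcal P}=Q_0\mid Q_1\mid\cdots\mid Q_L$, indexed so that $Q_0=\{\varepsilon_H\}$. Let $K_{\ell,m}$ ($\ell\in\{0,\dots,L\}$, $m\in\{0,\dots,M\}$) be the Krawtchouk coefficients of $(\mathcal P,\widehat{\mathcal P})$. Put $P_{-1}:=G\setminus H$ and $\mathcal P'=P_{-1}\mid P_0\mid\cdots\mid P_M$, a partition of $G$. Then the dual partition of $\mathcal P'$ is $\widehat{\mathcal P'}=Q'_{-1}\mid Q'_0\mid Q'_1\mid\cdots\mid Q'_L$, where $Q'_{-1}=H^{\perp}\setminus\{\varepsilon_G\}$, $Q'_0=\{\varepsilon_G\}$ and $Q'_\ell=\{\chi\in\widehat G\setminus H^\perp : \chi|_H\in Q_\ell\}$ for $\ell=1,\dots,L$ (all empty sets being discarded). The Krawtchouk coefficients $K'_{\ell,m}$ ($\ell\in\{-1,\dots,L\}$, $m\in\{-1,\dots,M\}$) of $(\mathcal P',\widehat{\mathcal P'})$ are: $K'_{-1,-1}=-|H|$, $K'_{-1,m}=|P_m|$ for $m\ge 0$; $K'_{0,-1}=|P_{-1}|$, $K'_{0,m}=K_{0,m}$ for $m\ge0$; and for $\ell\ge1$: $K'_{\ell,-1}=0$, $K'_{\ell,m}=K_{\ell,m}$ for $m\ge0$. Consequently, if $\mathcal P$ is reflexive, then so is $\mathcal 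P'$.
   Context: For a finite abelian group $G$, $\widehat G=\mathrm{Hom}(G,\mathbb C^* )$ is its character group, with zero element the principal character $\varepsilon_G\equiv1$; $\chi|_H$ denotes restriction, and $H^\perp=\{\chi\in\widehat G:\chi(h)=1\ \forall h\in H\}$. For a partition $\mathcal P=P_1\mid\cdots\mid P_M$ of $G$, its dual partition $\widehat{\mathcal P}$ is the partition of $\widehat G$ given by $\chi\sim\chi'$ iff $\sum_{g\in P_m}\chi(g)=\sum_{g\in P_m}\chi'(g)$ for all $m$. (The singleton $\{\varepsilon\}$ is always a block of a dual partition.) If $\widehat{\mathcal P}=Q_1\mid\cdots\mid Q_L$, the Krawtchouk coefficients of $(\mathcal P,\widehat{\mathcal P})$ are $K_{\ell,m}=\sum_{g\in P_m}\chi(g)$ for any $\chi\in Q_\ell$ (independent of the choice of $\chi$). $\mathcal P$ is reflexive if its bidual (a partition of $\widehat{\widehat G}\cong G$ via the canonical isomorphism) equals $\mathcal P$; equivalently, $\mathcal P$ and $\widehat{\mathcal P}$ have the same number of blocks. *)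

theory Defs
  imports "HOL-Algebra.Group" "HOL-Library.Disjoint_Sets" Complex_Main
begin

(* Characters of a (finite abelian) group G: homomorphisms carrier G -> C^*,
   normalised to be 0 outside the carrier so that equality of characters is
   equality of functions. *)
definition chars :: "('a, 'b) monoid_scheme \<Rightarrow> ('a \<Rightarrow> complex) set" where
  "chars G = {\<chi>. (\<forall>x\<in>carrier G. \<forall>y\<in>carrier G. \<chi> (x \<otimes>\<^bsub>G\<^esub> y) = \<chi> x * \<chi> y)
                  \<and> (\<forall>x\<in>carrier G. \<chi> x \<noteq> 0)
                  \<and> (\<forall>x. x \<notin> carrier G \<longrightarrow> \<chi> x = 0)}"

definition principal :: "('a, 'b) monoid_scheme \<Rightarrow> 'a \<Rightarrow> complex" where
  "principal G = (\<lambda>x. if x \<in> carrier G then 1 else 0)"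

definition restr :: "('a \<Rightarrow> complex) \<Rightarrow> 'a set \<Rightarrow> 'a \<Rightarrow> complex" where
  "restr \<chi> H = (\<lambda>x. if x \<in> H then \<chi> x else 0)"

definition annihilator :: "('a, 'b) monoid_scheme \<Rightarrow> 'a set \<Rightarrow> ('a \<Rightarrow> complex) set" where
  "annihilator G H = {\<chi> \<in> chars G. \<forall>h\<in>H. \<chi> h = 1}"

definition dual_part :: "('a, 'b) monoid_scheme \<Rightarrow> 'a set set \<Rightarrow> ('a \<Rightarrow> complex) set set" where
  "dual_part G P = (\<lambda>\<chi>. {\<psi> \<in> chars G. \<forall>B\<in>P. sum \<psi> B = sum \<chi> B}) ` chars G"

definition kraw :: "('a \<Rightarrow> complex) set \<Rightarrow> 'a set \<Rightarrow> complex" where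
  "kraw Q B = sum (SOME \<chi>. \<chi> \<in> Q) B"

(* bidual partition, transported to G along the canonical isomorphism
   g |-> (chi |-> chi g):  g ~ g' iff sum_{chi in Q} chi g = sum_{chi in Q} chi g'
   for all blocks Q of the dual partition *)
definition bidual_part :: "('a, 'b) monoid_scheme \<Rightarrow> 'a set set \<Rightarrow> 'a set set" where
  "bidual_part G P = (\<lambda>g. {h \<in> carrier G. \<forall>Q\<in>dual_part G P.
        (\<Sum>\<chi>\<in>Q. \<chi> h) = (\<Sum>\<chi>\<in>Q. \<chi> g)}) ` carrier G"

definition reflexive_part :: "('a, 'b) monoid_scheme \<Rightarrow> 'a set set \<Rightarrow> bool" where
  "reflexive_part G P \<longleftrightarrow> bidual_part G P = P"

definition lift_block :: "('a, 'b) monoid_scheme \<Rightarrow> 'a set \<Rightarrow> ('a \<Rightarrow> complex) set \<Rightarrow> ('a \<Rightarrow> complex) set" where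
  "lift_block G H Q = {\<chi> \<in> chars G - annihilator G H. restr \<chi> H \<in> Q}"

end

theory Submission
  imports Defs "HOL-Algebra.Multiplicative_Group"
begin

text \<open>
  By orthogonality on \<open>G\<close> and on \<open>H\<close>, the sum of a character \<open>\<chi>\<close> of \<open>G\<close> over \<open>G - H\<close> is
  \<open>|G| - |H|\<close>, \<open>-|H|\<close> or \<open>0\<close> according as \<open>\<chi>\<close> is principal, a non-principal element
  of \<open>H\<^sup>\<bottom>\<close>, or outside \<open>H\<^sup>\<bottom>\<close>; its sums over the blocks of \<open>P\<close> are those of \<open>\<chi>|\<^sub>H\<close>.
  This determines the dual classes of \<open>P'\<close> and their Krawtchouk coefficients.

  For reflexivity, every character of \<open>H\<close> extends to \<open>G\<close> (adjoin one element \<open>a\<close> at a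
  time, sending \<open>a\<close> to an \<open>n\<close>-th root of the value at \<open>a\<^sup>n\<close>), in exactly \<open>|H\<^sup>\<bottom>|\<close> ways.
  Hence summing a lifted block at \<open>g\<close> gives \<open>|H\<^sup>\<bottom>|\<close> times the sum of the original block
  if \<open>g \<in> H\<close> and \<open>0\<close> otherwise, while \<open>H\<^sup>\<bottom> - {\<epsilon>}\<close> separates \<open>H\<close> from \<open>G - H\<close>. So the
  bidual classes of \<open>P'\<close> are \<open>G - H\<close> together with the bidual classes of \<open>P\<close>.
\<close>

lemma chars_carrier_update [simp]:
  "chars (G\<lparr>carrier := H\<rparr>) = {\<chi>. (\<forall>x\<in>H. \<forall>y\<in>H. \<chi> (x \<otimes>\<^bsub>G\<^esub> y) = \<chi> x * \<chi> y)
     \<and> (\<forall>x\<in>H. \<chi> x \<noteq> 0) \<and> (\<forall>x. x \<notin> H \<longrightarrow> \<chi> x = 0)}"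
  by (simp add: chars_def)

lemma principal_carrier_update [simp]:
  "principal (G\<lparr>carrier := H\<rparr>) = (\<lambda>x. if x \<in> H then 1 else 0)"
  by (simp add: principal_def)

lemma chars_mult: "\<chi> \<in> chars G \<Longrightarrow> x \<in> carrier G \<Longrightarrow> y \<in> carrier G \<Longrightarrow> \<chi> (x \<otimes>\<^bsub>G\<^esub> y) = \<chi> x * \<chi> y"
  and chars_nonzero: "\<chi> \<in> chars G \<Longrightarrow> x \<in> carrier G \<Longrightarrow> \<chi> x \<noteq> 0"
  and chars_outside: "\<chi> \<in> chars G \<Longrightarrow> x \<notin> carrier G \<Longrightarrow> \<chi> x = 0"
  by (auto simp: chars_def)

lemma chars_one:
  assumes "monoid G" "\<chi> \<in> chars G" shows "\<chi> \<one>\<^bsub>G\<^esub> = 1"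
proof -
  have "\<chi> \<one>\<^bsub>G\<^esub> * \<chi> \<one>\<^bsub>G\<^esub> = \<chi> \<one>\<^bsub>G\<^esub> * 1"
    using chars_mult[OF assms(2)] monoid.one_closed[OF assms(1)] by (metis monoid.l_one[OF assms(1)] mult_1_right)
  then show ?thesis using chars_nonzero[OF assms(2) monoid.one_closed[OF assms(1)]] by simp
qed

lemma chars_pow:
  assumes "monoid G" "\<chi> \<in> chars G" "x \<in> carrier G"
  shows "\<chi> (x [^]\<^bsub>G\<^esub> (n::nat)) = \<chi> x ^ n"
  by (induction n) (simp_all add: chars_one chars_mult monoid.nat_pow_closed assms)

lemma principal_in_chars: "monoid G \<Longrightarrow> principal G \<in> chars G"
  by (auto simp: chars_def principal_def monoid.m_closed)

lemma chars_times: "\<chi> \<in> chars G \<Longrightarrow> \<psi> \<in> chars G \<Longrightarrow> (\<lambda>x. \<chi> x * \<psi> x) \<in> chars G"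
  by (auto simp: chars_def)

lemma chars_inverse: "\<chi> \<in> chars G \<Longrightarrow> (\<lambda>x. inverse (\<chi> x)) \<in> chars G"
  by (auto simp: chars_def)

lemma finite_chars:
  assumes "group G" "finite (carrier G)" shows "finite (chars G)"
proof -
  interpret group G by fact
  let ?n = "order G"
  have "chars G \<subseteq> {f. \<forall>x. (x \<in> carrier G \<longrightarrow> f x \<in> {z. z ^ ?n = 1}) \<and> (x \<notin> carrier G \<longrightarrow> f x = 0)}"
    using chars_pow[OF is_monoid] chars_one[OF is_monoid] pow_order_eq_1 chars_outside by fastforce
  moreover have "finite {f. \<forall>x. (x \<in> carrier G \<longrightarrow> f x \<in> {z::complex. z ^ ?n = 1}) \<and> (x \<notin> carrier G \<longrightarrow> f x = 0)}"
    using assms(2) order_gt_0_iff_finite finite_roots_unity by (intro finite_set_of_finite_funs) auto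
  ultimately show ?thesis by (rule finite_subset)
qed

lemma sum_principal: "finite A \<Longrightarrow> A \<subseteq> carrier G \<Longrightarrow> sum (principal G) A = of_nat (card A)"
  by (simp add: principal_def subset_iff)

lemma (in group) sum_chars_nonprincipal:
  assumes "\<chi> \<in> chars G" "\<chi> \<noteq> principal G"
  shows "sum \<chi> (carrier G) = 0"
proof -
  obtain x where x: "x \<in> carrier G" "\<chi> x \<noteq> 1"
    using assms chars_outside by (force simp: principal_def)
  have "sum \<chi> (carrier G) = sum \<chi> ((\<otimes>) x ` carrier G)"
    using x(1) surj_const_mult by simp
  also have "\<dots> = \<chi> x * sum \<chi> (carrier G)"
    by (simp add: sum.reindex inj_on_cmult x(1) sum_distrib_left chars_mult[OF assms(1)])
  finally show ?thesis using x(2) by (metis mult_cancel_right1)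
qed

lemma (in group) subgroup_nat_pow_closed:
  "subgroup H G \<Longrightarrow> h \<in> H \<Longrightarrow> h [^] (n::nat) \<in> H"
  by (induction n) (auto simp: subgroup.one_closed subgroup.m_closed)

lemma (in group) ex_pow_mem_subgroup_iff_dvd:
  assumes "finite (carrier G)" "subgroup H G" "a \<in> carrier G"
  shows "\<exists>n::nat. 0 < n \<and> (\<forall>m. a [^] m \<in> H \<longleftrightarrow> n dvd m)"
proof -
  define n where "n = (LEAST n::nat. 0 < n \<and> a [^] n \<in> H)"
  have "0 < order G \<and> a [^] order G \<in> H"
    using assms pow_order_eq_1 order_gt_0_iff_finite subgroup.one_closed by auto
  then have n: "0 < n" "a [^] n \<in> H"
    unfolding n_def by (metis (mono_tags, lifting) LeastI)+
  have "a [^] m \<in> H \<longleftrightarrow> n dvd m" for m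
  proof
    assume m: "a [^] m \<in> H"
    have "a [^] m = (a [^] n) [^] (m div n) \<otimes> a [^] (m mod n)"
      using assms(3) by (simp add: nat_pow_pow nat_pow_mult)
    then have "a [^] (m mod n) = inv ((a [^] n) [^] (m div n)) \<otimes> a [^] m"
      using assms(3) by (simp add: inv_solve_left)
    also have "\<dots> \<in> H"
      using assms(2) m n(2) subgroup_nat_pow_closed by (simp add: subgroup.m_closed subgroup.m_inv_closed)
    finally have "a [^] (m mod n) \<in> H" .
    then have "\<not> 0 < m mod n"
      using n(1) not_less_Least[of "m mod n" "\<lambda>n. 0 < n \<and> a [^] n \<in> H"] by (simp add: n_def)
    then show "n dvd m" by (simp add: dvd_eq_mod_eq_0)
  next
    assume "n dvd m"
    then obtain q where "m = n * q" by blast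
    then show "a [^] m \<in> H"
      using n(2) assms(2,3) subgroup_nat_pow_closed by (simp add: nat_pow_pow[symmetric])
  qed
  then show ?thesis using n(1) by blast
qed

context comm_group
begin

context
  fixes H :: "'a set" and \<phi> :: "'a \<Rightarrow> complex" and a :: 'a and n :: nat and z :: complex
  assumes fin: "finite (carrier G)" and H: "subgroup H G" and \<phi>: "\<phi> \<in> chars (G\<lparr>carrier := H\<rparr>)"
    and a: "a \<in> carrier G" and n: "0 < n" and index: "\<And>m. a [^] m \<in> H \<longleftrightarrow> n dvd m"
    and root: "z ^ n = \<phi> (a [^] n)"
begin

private lemma H_subset: "H \<subseteq> carrier G"
  using H by (rule subgroup.subset)

private lemma \<phi>_mult: "x \<in> H \<Longrightarrow> y \<in> H \<Longrightarrow> \<phi> (x \<otimes> y) = \<phi> x * \<phi> y"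
  and \<phi>_nonzero: "x \<in> H \<Longrightarrow> \<phi> x \<noteq> 0"
  using \<phi> by auto

private lemma \<phi>_pow: "x \<in> H \<Longrightarrow> \<phi> (x [^] (m::nat)) = \<phi> x ^ m"
  and \<phi>_one: "\<phi> \<one> = 1"
  using chars_pow[OF group.is_monoid[OF subgroup.subgroup_is_group[OF H is_group]] \<phi>]
    chars_one[OF group.is_monoid[OF subgroup.subgroup_is_group[OF H is_group]] \<phi>]
  by (simp_all add: nat_pow_consistent[symmetric])

private lemma \<phi>_pow_adjoined: "a [^] m \<in> H \<Longrightarrow> \<phi> (a [^] m) = z ^ m"
proof -
  assume "a [^] m \<in> H"
  then obtain q where m: "m = n * q" using index by blast
  have "a [^] n \<in> H" using index by simp
  then have "\<phi> ((a [^] n) [^] q) = \<phi> (a [^] n) ^ q" by (rule \<phi>_pow)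
  then show ?thesis using a by (simp add: m nat_pow_pow root power_mult)
qed

private lemma adjoined_value_well_defined_le:
  assumes "h \<in> H" "h' \<in> H" "h \<otimes> a [^] k = h' \<otimes> a [^] k'" "k' \<le> k"
  shows "\<phi> h * z ^ k = \<phi> h' * z ^ k'"
proof -
  have hc: "h \<in> carrier G" "h' \<in> carrier G" using assms H_subset by auto
  have "(h \<otimes> a [^] (k - k')) \<otimes> a [^] k' = h' \<otimes> a [^] k'"
    using assms(3,4) hc a by (simp add: m_assoc nat_pow_mult)
  then have h': "h' = h \<otimes> a [^] (k - k')" using hc a by simp
  then have "a [^] (k - k') = inv h \<otimes> h'" using hc a by (simp add: inv_solve_left)
  then have "a [^] (k - k') \<in> H"
    using assms(1,2) H by (simp add: subgroup.m_closed subgroup.m_inv_closed)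
  then have "\<phi> h' = \<phi> h * z ^ (k - k')"
    using h' \<phi>_mult[OF assms(1)] \<phi>_pow_adjoined by simp
  then show ?thesis using assms(4) by (simp add: power_add[symmetric] mult.assoc)
qed

private lemma adjoined_value_well_defined:
  "h \<in> H \<Longrightarrow> h' \<in> H \<Longrightarrow> h \<otimes> a [^] k = h' \<otimes> a [^] k' \<Longrightarrow> \<phi> h * z ^ k = \<phi> h' * z ^ k'"
  using adjoined_value_well_defined_le[of h h' k k'] adjoined_value_well_defined_le[of h' h k' k]
  by (cases "k' \<le> k") auto

private lemma subgroup_adjoined: "subgroup {h \<otimes> a [^] (k::nat) | h k. h \<in> H} G"
proof (rule subgroupI)
  show "{h \<otimes> a [^] (k::nat) | h k. h \<in> H} \<subseteq> carrier G"
    using H_subset a by (auto intro!: m_closed)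
  show "{h \<otimes> a [^] (k::nat) | h k. h \<in> H} \<noteq> {}"
    using subgroup.one_closed[OF H] by blast
  show "x \<otimes> y \<in> {h \<otimes> a [^] (k::nat) | h k. h \<in> H}"
    if xy: "x \<in> {h \<otimes> a [^] (k::nat) | h k. h \<in> H}" "y \<in> {h \<otimes> a [^] (k::nat) | h k. h \<in> H}" for x y
  proof -
    obtain h h' and k k' :: nat where hk: "h \<in> H" "h' \<in> H" "x = h \<otimes> a [^] k" "y = h' \<otimes> a [^] k'"
      using xy by blast
    moreover have "h \<in> carrier G" "h' \<in> carrier G" using hk H_subset by auto
    ultimately have "x \<otimes> y = (h \<otimes> h') \<otimes> a [^] (k + k')"
      using a by (simp add: m_ac nat_pow_mult[symmetric])
    then show ?thesis using hk subgroup.m_closed[OF H] by blast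
  qed
  show "inv x \<in> {h \<otimes> a [^] (k::nat) | h k. h \<in> H}" if x: "x \<in> {h \<otimes> a [^] (k::nat) | h k. h \<in> H}" for x
  proof -
    obtain h and k :: nat where hk: "h \<in> H" "x = h \<otimes> a [^] k" using x by blast
    have "k + k * (order G - 1) = order G * k"
      using fin order_gt_0_iff_finite by (cases "order G") auto
    then have "a [^] k \<otimes> a [^] (k * (order G - 1)) = (a [^] order G) [^] k"
      using a by (simp only: nat_pow_mult nat_pow_pow)
    then have "a [^] k \<otimes> a [^] (k * (order G - 1)) = \<one>"
      using pow_order_eq_1[OF a] by simp
    then have "inv x = inv h \<otimes> a [^] (k * (order G - 1))"
      using hk H_subset a by (intro inv_equality) (auto simp: m_ac)
    then show ?thesis using subgroup.m_inv_closed[OF H hk(1)] by blast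
  qed
qed

text \<open>The extension is \<open>h \<otimes> a [^] k \<mapsto> \<phi> h * z ^ k\<close> on the subgroup generated by \<open>H\<close> and \<open>a\<close>.\<close>
lemma char_extend_step:
  obtains H' \<chi> where "subgroup H' G" "H \<subseteq> H'" "a \<in> H'" "\<chi> \<in> chars (G\<lparr>carrier := H'\<rparr>)"
    "\<forall>h\<in>H. \<chi> h = \<phi> h" "\<chi> a = z"
proof -
  define H' where "H' = {h \<otimes> a [^] (k::nat) | h k. h \<in> H}"
  define \<chi> where "\<chi> x = (if x \<in> H' then
      (let r = SOME r. fst r \<in> H \<and> x = fst r \<otimes> a [^] (snd r :: nat) in \<phi> (fst r) * z ^ snd r) else 0)" for x
  have \<chi>: "\<chi> (h \<otimes> a [^] k) = \<phi> h * z ^ k" if "h \<in> H" for h and k :: nat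
  proof -
    let ?R = "\<lambda>r. fst r \<in> H \<and> h \<otimes> a [^] k = fst r \<otimes> a [^] (snd r :: nat)"
    let ?r = "SOME r. ?R r"
    have r: "?R ?r" using someI[of ?R "(h, k)"] that by simp
    have "h \<otimes> a [^] k \<in> H'" using that unfolding H'_def by blast
    then have "\<chi> (h \<otimes> a [^] k) = \<phi> (fst ?r) * z ^ snd ?r" by (simp add: \<chi>_def Let_def)
    also have "\<dots> = \<phi> h * z ^ k"
      using adjoined_value_well_defined[of "fst ?r" h "snd ?r" k] r that by simp
    finally show ?thesis .
  qed
  have "z ^ n \<noteq> 0" using root \<phi>_nonzero index by simp
  then have z: "z \<noteq> 0" using n by auto
  have "\<chi> \<in> chars (G\<lparr>carrier := H'\<rparr>)"
  proof -
    have "\<chi> (x \<otimes> y) = \<chi> x * \<chi> y" if xy: "x \<in> H'" "y \<in> H'" for x y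
    proof -
      obtain h h' and k k' :: nat where hk: "h \<in> H" "h' \<in> H" "x = h \<otimes> a [^] k" "y = h' \<otimes> a [^] k'"
        using xy unfolding H'_def by blast
      moreover have "h \<in> carrier G" "h' \<in> carrier G" using hk H_subset by auto
      ultimately have "x \<otimes> y = (h \<otimes> h') \<otimes> a [^] (k + k')"
        using a by (simp add: m_ac nat_pow_mult[symmetric])
      then show ?thesis
        using hk \<chi> subgroup.m_closed[OF H] \<phi>_mult by (simp add: power_add mult_ac)
    qed
    moreover have "\<chi> x \<noteq> 0" if "x \<in> H'" for x
      using that \<chi> \<phi>_nonzero z unfolding H'_def by auto
    ultimately show ?thesis by (auto simp: \<chi>_def)
  qed
  moreover have "H \<subseteq> H'" "\<forall>h\<in>H. \<chi> h = \<phi> h"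
  proof -
    have "h = h \<otimes> a [^] (0::nat)" if "h \<in> H" for h using that H_subset by auto
    then show "H \<subseteq> H'" "\<forall>h\<in>H. \<chi> h = \<phi> h" unfolding H'_def using \<chi>[of _ 0] by (blast, simp)
  qed
  moreover have "a \<in> H'" "\<chi> a = z"
  proof -
    have "a = \<one> \<otimes> a [^] (1::nat)" using a by simp
    then show "a \<in> H'" "\<chi> a = z" unfolding H'_def
      using \<chi>[of "\<one>" 1] subgroup.one_closed[OF H] \<phi>_one by (blast, simp)
  qed
  ultimately show ?thesis using that subgroup_adjoined unfolding H'_def by blast
qed

end

end

lemma (in comm_group) char_extend:
  assumes "finite (carrier G)"
  shows "subgroup H G \<Longrightarrow> \<phi> \<in> chars (G\<lparr>carrier := H\<rparr>) \<Longrightarrow> \<exists>\<chi>\<in>chars G. \<forall>h\<in>H. \<chi> h = \<phi> h"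
proof (induction "card (carrier G - H)" arbitrary: H \<phi> rule: less_induct)
  case less
  show ?case
  proof (cases "H = carrier G")
    case True
    then show ?thesis using less.prems(2) by (auto simp: chars_def)
  next
    case False
    then obtain a where a: "a \<in> carrier G" "a \<notin> H" using subgroup.subset[OF less.prems(1)] by blast
    obtain n :: nat where n: "0 < n" "\<forall>m. a [^] m \<in> H \<longleftrightarrow> n dvd m"
      using ex_pow_mem_subgroup_iff_dvd[OF assms less.prems(1) a(1)] by blast
    have "\<phi> (a [^] n) \<noteq> 0" using less.prems(2) n(2) by simp
    then have "card {z. z ^ n = \<phi> (a [^] n)} = n" using n(1) by (rule card_nth_roots)
    then have "{z. z ^ n = \<phi> (a [^] n)} \<noteq> {}" using n(1) by force
    then obtain z where "z ^ n = \<phi> (a [^] n)" by blast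
    then obtain H' \<chi>' where H': "subgroup H' G" "H \<subseteq> H'" "a \<in> H'"
      "\<chi>' \<in> chars (G\<lparr>carrier := H'\<rparr>)" "\<forall>h\<in>H. \<chi>' h = \<phi> h" "\<chi>' a = z"
      by (rule char_extend_step[OF assms less.prems a(1) n(1) n(2)[rule_format]])
    have "card (carrier G - H') < card (carrier G - H)"
      using H'(2,3) a assms by (intro psubset_card_mono) auto
    then obtain \<chi> where "\<chi> \<in> chars G" "\<forall>h\<in>H'. \<chi> h = \<chi>' h"
      using less.hyps[OF _ H'(1,4)] by blast
    then show ?thesis using H'(2,5) by (metis subsetD)
  qed
qed

lemma (in comm_group) annihilator_separates:
  assumes "finite (carrier G)" "subgroup H G" "g \<in> carrier G" "g \<notin> H"
  obtains \<psi> where "\<psi> \<in> annihilator G H" "\<psi> g \<noteq> 1"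
proof -
  obtain n :: nat where n: "0 < n" "\<forall>m. g [^] m \<in> H \<longleftrightarrow> n dvd m"
    using ex_pow_mem_subgroup_iff_dvd[OF assms(1,2,3)] by blast
  have "n \<noteq> 1"
  proof
    assume "n = 1"
    then have "g [^] (1::nat) \<in> H" using n(2)[rule_format, of 1] by simp
    then show False using assms(3,4) by simp
  qed
  have "\<not> {z::complex. z ^ n = 1} \<subseteq> {1}"
  proof
    assume "{z::complex. z ^ n = 1} \<subseteq> {1}"
    then have "card {z::complex. z ^ n = 1} \<le> card {1::complex}" by (intro card_mono) auto
    then show False using card_roots_unity_eq[OF n(1)] \<open>n \<noteq> 1\<close> n(1) by simp
  qed
  then obtain z :: complex where z: "z ^ n = 1" "z \<noteq> 1" by blast
  let ?\<epsilon> = "principal (G\<lparr>carrier := H\<rparr>)"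
  have \<epsilon>: "?\<epsilon> \<in> chars (G\<lparr>carrier := H\<rparr>)" "z ^ n = ?\<epsilon> (g [^] n)"
    using subgroup.m_closed[OF assms(2)] z(1) n(2) by auto
  obtain H' \<chi>' where H': "subgroup H' G" "H \<subseteq> H'" "g \<in> H'"
    "\<chi>' \<in> chars (G\<lparr>carrier := H'\<rparr>)" "\<forall>h\<in>H. \<chi>' h = ?\<epsilon> h" "\<chi>' g = z"
    by (rule char_extend_step[OF assms(1,2) \<epsilon>(1) assms(3) n(1) n(2)[rule_format] \<epsilon>(2)])
  obtain \<psi> where "\<psi> \<in> chars G" "\<forall>h\<in>H'. \<psi> h = \<chi>' h"
    using char_extend[OF assms(1) H'(1,4)] by blast
  then have "\<psi> \<in> annihilator G H" "\<psi> g \<noteq> 1"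
    using H'(2,3,5,6) z(2) assms(2) subgroup.subset by (auto simp: annihilator_def)
  then show ?thesis by (rule that)
qed

lemma inj_on_chars_times: "\<chi>\<^sub>0 \<in> chars G \<Longrightarrow> inj_on (\<lambda>\<psi> x. \<chi>\<^sub>0 x * \<psi> x) (chars G)"
proof (rule inj_onI, rule ext)
  fix \<psi> \<psi>' x assume \<chi>\<^sub>0: "\<chi>\<^sub>0 \<in> chars G" and \<psi>: "\<psi> \<in> chars G" "\<psi>' \<in> chars G"
    and eq: "(\<lambda>x. \<chi>\<^sub>0 x * \<psi> x) = (\<lambda>x. \<chi>\<^sub>0 x * \<psi>' x)"
  show "\<psi> x = \<psi>' x"
    using fun_cong[OF eq, of x] chars_nonzero[OF \<chi>\<^sub>0] chars_outside[OF \<psi>(1)] chars_outside[OF \<psi>(2)]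
    by (cases "x \<in> carrier G") auto
qed

lemma chars_agreeing_eq_image_annihilator:
  assumes "\<chi>\<^sub>0 \<in> chars G" "H \<subseteq> carrier G"
  shows "{\<chi> \<in> chars G. \<forall>h\<in>H. \<chi> h = \<chi>\<^sub>0 h} = (\<lambda>\<psi> x. \<chi>\<^sub>0 x * \<psi> x) ` annihilator G H"
proof (intro equalityI subsetI)
  fix \<chi> assume \<chi>: "\<chi> \<in> {\<chi> \<in> chars G. \<forall>h\<in>H. \<chi> h = \<chi>\<^sub>0 h}"
  let ?\<psi> = "\<lambda>x. inverse (\<chi>\<^sub>0 x) * \<chi> x"
  have "?\<psi> \<in> annihilator G H"
    using chars_times[OF chars_inverse[OF assms(1)]] \<chi> assms chars_nonzero[OF assms(1)]
    by (auto simp: annihilator_def)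
  moreover have "\<chi> = (\<lambda>x. \<chi>\<^sub>0 x * ?\<psi> x)"
    using chars_nonzero[OF assms(1)] chars_outside \<chi> by (fastforce simp: fun_eq_iff)
  ultimately show "\<chi> \<in> (\<lambda>\<psi> x. \<chi>\<^sub>0 x * \<psi> x) ` annihilator G H"
    by (intro image_eqI[where x = ?\<psi>])
qed (use assms chars_times in \<open>auto simp: annihilator_def\<close>)

lemma sum_chars_agreeing:
  assumes "\<chi>\<^sub>0 \<in> chars G" "H \<subseteq> carrier G"
  shows "(\<Sum>\<chi> \<in> {\<chi> \<in> chars G. \<forall>h\<in>H. \<chi> h = \<chi>\<^sub>0 h}. \<chi> x) = \<chi>\<^sub>0 x * (\<Sum>\<psi>\<in>annihilator G H. \<psi> x)"
proof -
  have "inj_on (\<lambda>\<psi> x. \<chi>\<^sub>0 x * \<psi> x) (annihilator G H)"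
    using inj_on_chars_times[OF assms(1)] by (rule inj_on_subset) (auto simp: annihilator_def)
  then show ?thesis
    by (simp add: chars_agreeing_eq_image_annihilator[OF assms] sum.reindex sum_distrib_left)
qed

lemma (in comm_group) sum_annihilator:
  assumes "finite (carrier G)" "subgroup H G" "x \<in> carrier G"
  shows "(\<Sum>\<psi>\<in>annihilator G H. \<psi> x) = (if x \<in> H then of_nat (card (annihilator G H)) else 0)"
proof (cases "x \<in> H")
  case False
  then obtain \<psi>\<^sub>0 where \<psi>\<^sub>0: "\<psi>\<^sub>0 \<in> annihilator G H" "\<psi>\<^sub>0 x \<noteq> 1"
    using annihilator_separates[OF assms] by blast
  have "{\<chi> \<in> chars G. \<forall>h\<in>H. \<chi> h = \<psi>\<^sub>0 h} = annihilator G H"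
    using \<psi>\<^sub>0(1) by (auto simp: annihilator_def)
  then have "(\<Sum>\<psi>\<in>annihilator G H. \<psi> x) = \<psi>\<^sub>0 x * (\<Sum>\<psi>\<in>annihilator G H. \<psi> x)"
    using sum_chars_agreeing[of \<psi>\<^sub>0 G H x] \<psi>\<^sub>0(1) subgroup.subset[OF assms(2)]
    by (simp add: annihilator_def)
  then show ?thesis using \<psi>\<^sub>0(2) False by (metis mult_cancel_right1 mult.commute)
qed (simp add: annihilator_def)

lemma (in comm_group) sum_chars_restricting_to:
  assumes "finite (carrier G)" "subgroup H G" "\<phi> \<in> chars (G\<lparr>carrier := H\<rparr>)" "x \<in> carrier G"
  shows "(\<Sum>\<chi> \<in> {\<chi> \<in> chars G. restr \<chi> H = \<phi>}. \<chi> x)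
    = (if x \<in> H then of_nat (card (annihilator G H)) * \<phi> x else 0)"
proof -
  obtain \<chi>\<^sub>0 where \<chi>\<^sub>0: "\<chi>\<^sub>0 \<in> chars G" "\<forall>h\<in>H. \<chi>\<^sub>0 h = \<phi> h"
    using char_extend[OF assms(1-3)] by blast
  have "{\<chi> \<in> chars G. restr \<chi> H = \<phi>} = {\<chi> \<in> chars G. \<forall>h\<in>H. \<chi> h = \<chi>\<^sub>0 h}"
    using \<chi>\<^sub>0(2) assms(3) by (auto simp: restr_def fun_eq_iff)
  then show ?thesis
    using sum_chars_agreeing[OF \<chi>\<^sub>0(1) subgroup.subset[OF assms(2)], of x]
      sum_annihilator[OF assms(1,2,4)] \<chi>\<^sub>0(2) by auto
qed

definition dual_class :: "('a, 'b) monoid_scheme \<Rightarrow> 'a set set \<Rightarrow> ('a \<Rightarrow> complex) \<Rightarrow> ('a \<Rightarrow> complex) set" where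
  "dual_class G P \<chi> = {\<psi> \<in> chars G. \<forall>B\<in>P. sum \<psi> B = sum \<chi> B}"

lemma dual_part_eq_image_dual_class: "dual_part G P = dual_class G P ` chars G"
  by (simp add: dual_part_def dual_class_def)

lemma dual_class_self: "\<chi> \<in> chars G \<Longrightarrow> \<chi> \<in> dual_class G P \<chi>"
  by (simp add: dual_class_def)

lemma dual_class_eq: "\<psi> \<in> dual_class G P \<chi> \<Longrightarrow> dual_class G P \<psi> = dual_class G P \<chi>"
  by (auto simp: dual_class_def)

lemma dual_part_subset_chars: "Q \<in> dual_part G P \<Longrightarrow> Q \<subseteq> chars G"
  by (auto simp: dual_part_eq_image_dual_class dual_class_def)

lemma kraw_dual_class: "\<chi> \<in> chars G \<Longrightarrow> B \<in> P \<Longrightarrow> kraw (dual_class G P \<chi>) B = sum \<chi> B"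
  using someI[of "\<lambda>\<psi>. \<psi> \<in> dual_class G P \<chi>", OF dual_class_self]
  by (simp add: kraw_def dual_class_def)

locale subgroup_partition = comm_group G for G (structure) +
  fixes H :: "'a set" and P :: "'a set set"
  assumes finite_carrier: "finite (carrier G)" and subgroup_H: "subgroup H G"
    and proper_subgroup: "H \<noteq> carrier G" and partition: "partition_on H P"
begin

abbreviation "GH \<equiv> G\<lparr>carrier := H\<rparr>"
abbreviation "D \<equiv> carrier G - H"
abbreviation "P' \<equiv> insert D P"
abbreviation "ann \<equiv> annihilator G H"
abbreviation "\<epsilon> \<equiv> principal G"
abbreviation "\<epsilon>H \<equiv> principal GH"

lemma H_subset: "H \<subseteq> carrier G"
  using subgroup_H by (rule subgroup.subset)

lemma finite_H: "finite H"
  using H_subset finite_carrier finite_subset by blast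

lemma card_H_pos: "0 < card H"
  using finite_H subgroup.one_closed[OF subgroup_H] card_gt_0_iff by blast

lemma card_H_less: "card H < card (carrier G)"
  using H_subset proper_subgroup finite_carrier psubset_card_mono by blast

lemma block_subset: "B \<in> P \<Longrightarrow> B \<subseteq> H"
  using partition by (auto simp: partition_on_def)

lemma finite_block: "B \<in> P \<Longrightarrow> finite B"
  using block_subset finite_H finite_subset by blast

lemma group_GH: "group GH"
  using subgroup.subgroup_is_group[OF subgroup_H is_group] .

lemma finite_chars_G: "finite (chars G)"
  using finite_chars[OF is_group finite_carrier] .

lemma finite_chars_GH: "finite (chars GH)"
  using finite_chars[OF group_GH] finite_H by simp

lemma finite_annihilator: "finite ann"
  using finite_chars_G by (rule finite_subset[rotated]) (auto simp: annihilator_def)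

lemma principal_in_annihilator: "\<epsilon> \<in> ann"
  using principal_in_chars[OF is_monoid] H_subset by (auto simp: annihilator_def principal_def)

lemma principal_in_chars_GH: "\<epsilon>H \<in> chars GH"
  using principal_in_chars[OF group.is_monoid[OF group_GH]] .

lemma sum_over_blocks: "sum f H = (\<Sum>B\<in>P. sum f B)"
proof -
  have "sum f (\<Union>P) = (sum \<circ> sum) f P"
    using partition finite_block
    by (intro sum.Union_disjoint) (auto simp: partition_on_def disjoint_def)
  then show ?thesis using partition by (simp add: partition_on_def)
qed

lemma restr_in_chars_GH: "\<chi> \<in> chars G \<Longrightarrow> restr \<chi> H \<in> chars GH"
  using H_subset subgroup.m_closed[OF subgroup_H]
  by (auto simp: restr_def chars_mult chars_nonzero subsetD)

lemma sum_restr: "B \<subseteq> H \<Longrightarrow> sum (restr \<chi> H) B = sum \<chi> B"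
  by (intro sum.cong) (auto simp: restr_def)

lemma restr_eq_principal_iff: "\<chi> \<in> chars G \<Longrightarrow> restr \<chi> H = \<epsilon>H \<longleftrightarrow> \<chi> \<in> ann"
  by (auto simp: restr_def annihilator_def fun_eq_iff)

lemma sum_H_chars_GH: "\<psi> \<in> chars GH \<Longrightarrow> sum \<psi> H = (if \<psi> = \<epsilon>H then of_nat (card H) else 0)"
  using group.sum_chars_nonprincipal[OF group_GH, of \<psi>] finite_H by auto

lemma sum_H: "\<chi> \<in> chars G \<Longrightarrow> sum \<chi> H = (if \<chi> \<in> ann then of_nat (card H) else 0)"
  using sum_H_chars_GH[OF restr_in_chars_GH] sum_restr[of H] restr_eq_principal_iff by simp

lemma sum_outside: "\<chi> \<in> chars G \<Longrightarrow> sum \<chi> D =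
    (if \<chi> = \<epsilon> then of_nat (card (carrier G)) - of_nat (card H)
     else if \<chi> \<in> ann then - of_nat (card H) else 0)"
  using sum_diff[OF finite_carrier H_subset, of \<chi>] sum_H[of \<chi>] principal_in_annihilator
    sum_chars_nonprincipal[of \<chi>] sum_principal[OF finite_carrier, of G]
  by auto

lemma sum_outside_eq_iff:
  assumes "\<chi> \<in> chars G" "\<psi> \<in> chars G"
  shows "sum \<psi> D = sum \<chi> D \<longleftrightarrow> (\<psi> = \<epsilon> \<longleftrightarrow> \<chi> = \<epsilon>) \<and> (\<psi> \<in> ann \<longleftrightarrow> \<chi> \<in> ann)"
proof -
  have "(of_nat (card (carrier G)) - of_nat (card H) :: complex) \<noteq> - of_nat (card H)"
    and "(of_nat (card (carrier G)) - of_nat (card H) :: complex) \<noteq> 0"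
    and "(- of_nat (card H) :: complex) \<noteq> 0"
    using card_H_less card_H_pos by auto
  then show ?thesis
    using sum_outside[OF assms(1)] sum_outside[OF assms(2)] principal_in_annihilator
    by (auto split: if_splits)
qed

lemma sum_block_annihilator: "\<chi> \<in> ann \<Longrightarrow> B \<in> P \<Longrightarrow> sum \<chi> B = of_nat (card B)"
  using block_subset by (auto simp: annihilator_def subset_iff)

lemma dual_class_principal_GH: "dual_class GH P \<epsilon>H = {\<epsilon>H}"
proof (intro equalityI subsetI)
  fix \<psi> assume \<psi>: "\<psi> \<in> dual_class GH P \<epsilon>H"
  have "sum \<psi> H = sum \<epsilon>H H"
    unfolding sum_over_blocks by (rule sum.cong[OF refl]) (use \<psi> in \<open>auto simp: dual_class_def\<close>)
  then show "\<psi> \<in> {\<epsilon>H}"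
    using \<psi> sum_H_chars_GH[of \<psi>] sum_H_chars_GH[OF principal_in_chars_GH] card_H_pos
    by (auto simp: dual_class_def split: if_splits)
qed (use dual_class_self[OF principal_in_chars_GH] in blast)

lemma principal_notin_block:
  assumes "Q \<in> dual_part GH P - {{\<epsilon>H}}" shows "\<epsilon>H \<notin> Q"
proof
  assume "\<epsilon>H \<in> Q"
  obtain \<phi> where "Q = dual_class GH P \<phi>"
    using assms by (auto simp: dual_part_eq_image_dual_class)
  then have "Q = dual_class GH P \<epsilon>H" using dual_class_eq \<open>\<epsilon>H \<in> Q\<close> by metis
  then show False using assms dual_class_principal_GH by simp
qed

lemma mem_dual_class_extended_iff:
  assumes "\<chi> \<in> chars G"
  shows "\<psi> \<in> dual_class G P' \<chi> \<longleftrightarrow> \<psi> \<in> chars G \<and> (\<psi> = \<epsilon> \<longleftrightarrow> \<chi> = \<epsilon>) \<and> (\<psi> \<in> ann \<longleftrightarrow> \<chi> \<in> ann)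
     \<and> (\<forall>B\<in>P. sum \<psi> B = sum \<chi> B)"
  using sum_outside_eq_iff[OF assms, of \<psi>] by (auto simp: dual_class_def)

lemma dual_class_extended_principal: "dual_class G P' \<epsilon> = {\<epsilon>}"
  using mem_dual_class_extended_iff[OF principal_in_chars[OF is_monoid]]
    principal_in_chars[OF is_monoid] by blast

lemma dual_class_extended_annihilator:
  assumes "\<chi> \<in> ann - {\<epsilon>}"
  shows "dual_class G P' \<chi> = ann - {\<epsilon>}"
proof -
  have \<chi>: "\<chi> \<in> chars G" using assms by (simp add: annihilator_def)
  show ?thesis
    using mem_dual_class_extended_iff[OF \<chi>] assms sum_block_annihilator
    by (auto simp: annihilator_def)
qed

lemma dual_class_extended_lift:
  assumes "\<chi> \<in> chars G - ann"
  shows "dual_class G P' \<chi> = lift_block G H (dual_class GH P (restr \<chi> H))"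
proof -
  have "\<chi> \<noteq> \<epsilon>" using assms principal_in_annihilator by blast
  have "\<psi> \<in> dual_class G P' \<chi> \<longleftrightarrow> \<psi> \<in> lift_block G H (dual_class GH P (restr \<chi> H))" for \<psi>
    using mem_dual_class_extended_iff[of \<chi> \<psi>] assms \<open>\<chi> \<noteq> \<epsilon>\<close> principal_in_annihilator
      restr_in_chars_GH[of \<psi>] sum_restr block_subset
    by (auto simp: lift_block_def dual_class_def annihilator_def)
  then show ?thesis by blast
qed

lemma dual_class_extended_lift_block:
  assumes "Q \<in> dual_part GH P" "\<chi> \<in> lift_block G H Q"
  shows "dual_class G P' \<chi> = lift_block G H Q"
proof -
  obtain \<phi> where "Q = dual_class GH P \<phi>"
    using assms(1) by (auto simp: dual_part_eq_image_dual_class)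
  moreover have \<chi>: "\<chi> \<in> chars G - ann" "restr \<chi> H \<in> Q"
    using assms(2) by (auto simp: lift_block_def)
  ultimately have "dual_class GH P (restr \<chi> H) = Q" using dual_class_eq by metis
  then show ?thesis using dual_class_extended_lift[OF \<chi>(1)] by simp
qed

lemma dual_part_extended: "dual_part G P' =
    ({ann - {\<epsilon>}} - {{}}) \<union> {{\<epsilon>}} \<union> (lift_block G H ` (dual_part GH P - {{\<epsilon>H}}) - {{}})"
    (is "_ = ?R")
proof (intro equalityI subsetI)
  fix X assume "X \<in> dual_part G P'"
  then obtain \<chi> where \<chi>: "\<chi> \<in> chars G" "X = dual_class G P' \<chi>"
    by (auto simp: dual_part_eq_image_dual_class)
  consider "\<chi> = \<epsilon>" | "\<chi> \<in> ann - {\<epsilon>}" | "\<chi> \<in> chars G - ann"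
    using \<chi>(1) principal_in_annihilator by blast
  then show "X \<in> ?R"
  proof cases
    case 3
    let ?Q = "dual_class GH P (restr \<chi> H)"
    have r: "restr \<chi> H \<in> chars GH" using 3 restr_in_chars_GH by blast
    then have Q: "restr \<chi> H \<in> ?Q" by (rule dual_class_self)
    have "?Q \<in> dual_part GH P" using r by (simp add: dual_part_eq_image_dual_class)
    moreover have "?Q \<noteq> {\<epsilon>H}" using Q restr_eq_principal_iff[of \<chi>] 3 by auto
    moreover have "\<chi> \<in> lift_block G H ?Q" using 3 Q by (simp add: lift_block_def)
    ultimately show ?thesis using \<chi>(2) dual_class_extended_lift[OF 3] by blast
  qed (use \<chi>(2) dual_class_extended_principal dual_class_extended_annihilator in auto)
next
  fix X assume "X \<in> ?R"
  then consider (ann) \<chi> where "\<chi> \<in> ann - {\<epsilon>}" "X = ann - {\<epsilon>}" | (principal) "X = {\<epsilon>}"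
    | (lift) Q \<chi> where "Q \<in> dual_part GH P" "\<chi> \<in> lift_block G H Q" "X = lift_block G H Q"
    by blast
  then show "X \<in> dual_part G P'"
  proof cases
    case ann
    then show ?thesis using dual_class_extended_annihilator[OF ann(1)]
      by (auto simp: dual_part_eq_image_dual_class annihilator_def)
  next
    case principal
    then show ?thesis using dual_class_extended_principal principal_in_chars[OF is_monoid]
      by (auto simp: dual_part_eq_image_dual_class)
  next
    case lift
    then show ?thesis using dual_class_extended_lift_block[OF lift(1,2)]
      by (auto simp: dual_part_eq_image_dual_class lift_block_def)
  qed
qed

lemma annihilator_nontrivial: "ann - {\<epsilon>} \<noteq> {}"
proof -
  obtain g where g: "g \<in> carrier G" "g \<notin> H" using H_subset proper_subgroup by blast
  obtain \<psi> where "\<psi> \<in> ann" "\<psi> g \<noteq> 1"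
    using annihilator_separates[OF finite_carrier subgroup_H g] by blast
  moreover have "\<epsilon> g = 1" using g by (simp add: principal_def)
  ultimately show ?thesis by auto
qed

lemma lift_block_eq:
  assumes "Q \<in> dual_part GH P - {{\<epsilon>H}}"
  shows "lift_block G H Q = {\<chi> \<in> chars G. restr \<chi> H \<in> Q}"
proof -
  have "\<chi> \<notin> ann" if "\<chi> \<in> chars G" "restr \<chi> H \<in> Q" for \<chi>
    using principal_notin_block[OF assms] restr_eq_principal_iff[OF that(1)] that(2) by metis
  then show ?thesis by (auto simp: lift_block_def)
qed

lemma lift_block_nonempty:
  assumes "Q \<in> dual_part GH P - {{\<epsilon>H}}" shows "lift_block G H Q \<noteq> {}"
proof -
  obtain \<phi> where \<phi>: "\<phi> \<in> chars GH" "Q = dual_class GH P \<phi>"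
    using assms by (auto simp: dual_part_eq_image_dual_class)
  obtain \<chi> where \<chi>: "\<chi> \<in> chars G" "\<forall>h\<in>H. \<chi> h = \<phi> h"
    using char_extend[OF finite_carrier subgroup_H \<phi>(1)] by blast
  then have "restr \<chi> H = \<phi>" using \<phi>(1) by (auto simp: restr_def fun_eq_iff)
  then have "\<chi> \<in> lift_block G H Q"
    using lift_block_eq[OF assms] \<chi>(1) \<phi>(2) dual_class_self[OF \<phi>(1)] by simp
  then show ?thesis by blast
qed

lemma kraw_annihilator_block:
  "kraw (ann - {\<epsilon>}) D = - of_nat (card H) \<and> (\<forall>B\<in>P. kraw (ann - {\<epsilon>}) B = of_nat (card B))"
proof -
  have "(SOME \<chi>. \<chi> \<in> ann - {\<epsilon>}) \<in> ann - {\<epsilon>}"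
    using annihilator_nontrivial some_in_eq by metis
  then show ?thesis
    using sum_outside sum_block_annihilator by (simp add: kraw_def annihilator_def)
qed

lemma kraw_principal_block:
  "kraw {\<epsilon>} D = of_nat (card D) \<and> (\<forall>B\<in>P. kraw {\<epsilon>} B = kraw {\<epsilon>H} B)"
proof -
  have "kraw {\<epsilon>} B = kraw {\<epsilon>H} B" if "B \<in> P" for B
    using block_subset[OF that] H_subset by (auto simp: kraw_def principal_def intro!: sum.cong)
  then show ?thesis using sum_principal[of D G] finite_carrier by (simp add: kraw_def)
qed

lemma kraw_lift_block:
  assumes "Q \<in> dual_part GH P - {{\<epsilon>H}}"
  shows "kraw (lift_block G H Q) D = 0 \<and> (\<forall>B\<in>P. kraw (lift_block G H Q) B = kraw Q B)"
proof -
  let ?\<chi> = "SOME \<chi>. \<chi> \<in> lift_block G H Q"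
  have \<chi>: "?\<chi> \<in> chars G - ann" "restr ?\<chi> H \<in> Q"
    using lift_block_nonempty[OF assms] some_in_eq[of "lift_block G H Q"] by (auto simp: lift_block_def)
  obtain \<phi> where \<phi>: "\<phi> \<in> chars GH" "Q = dual_class GH P \<phi>"
    using assms by (auto simp: dual_part_eq_image_dual_class)
  have "kraw (lift_block G H Q) B = kraw Q B" if "B \<in> P" for B
  proof -
    have "kraw (lift_block G H Q) B = sum (restr ?\<chi> H) B"
      using sum_restr[OF block_subset[OF that]] by (simp add: kraw_def)
    also have "\<dots> = sum \<phi> B" using \<chi>(2) \<phi>(2) that by (simp add: dual_class_def)
    finally show ?thesis using kraw_dual_class[OF \<phi>(1) that] \<phi>(2) by simp
  qed
  moreover have "kraw (lift_block G H Q) D = 0"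
    using sum_outside[of ?\<chi>] \<chi>(1) principal_in_annihilator by (auto simp: kraw_def)
  ultimately show ?thesis by blast
qed

lemma sum_annihilator_minus_principal:
  "x \<in> carrier G \<Longrightarrow> (\<Sum>\<chi>\<in>ann - {\<epsilon>}. \<chi> x) = (if x \<in> H then of_nat (card ann) - 1 else - 1)"
  using sum_diff1[OF finite_annihilator, of "\<lambda>\<chi>. \<chi> x" \<epsilon>] principal_in_annihilator
    sum_annihilator[OF finite_carrier subgroup_H, of x]
  by (simp add: principal_def)

lemma sum_lift_block:
  assumes "Q \<in> dual_part GH P - {{\<epsilon>H}}" "x \<in> carrier G"
  shows "(\<Sum>\<chi>\<in>lift_block G H Q. \<chi> x) = (if x \<in> H then of_nat (card ann) * (\<Sum>\<phi>\<in>Q. \<phi> x) else 0)"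
proof -
  let ?L = "{\<chi> \<in> chars G. restr \<chi> H \<in> Q}"
  have Q: "Q \<subseteq> chars GH" using assms(1) dual_part_subset_chars by blast
  have "(\<Sum>\<chi>\<in>lift_block G H Q. \<chi> x) = (\<Sum>\<chi>\<in>?L. \<chi> x)"
    using lift_block_eq[OF assms(1)] by simp
  also have "\<dots> = (\<Sum>\<phi>\<in>Q. \<Sum>\<chi> \<in> {\<chi> \<in> ?L. restr \<chi> H = \<phi>}. \<chi> x)"
    by (rule sum.group[symmetric]) (use finite_chars_G finite_subset[OF Q finite_chars_GH] in auto)
  also have "\<dots> = (\<Sum>\<phi>\<in>Q. if x \<in> H then of_nat (card ann) * \<phi> x else 0)"
  proof (rule sum.cong[OF refl])
    fix \<phi> assume "\<phi> \<in> Q"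
    then have "{\<chi> \<in> ?L. restr \<chi> H = \<phi>} = {\<chi> \<in> chars G. restr \<chi> H = \<phi>}" by auto
    then show "(\<Sum>\<chi> \<in> {\<chi> \<in> ?L. restr \<chi> H = \<phi>}. \<chi> x) = (if x \<in> H then of_nat (card ann) * \<phi> x else 0)"
      using sum_chars_restricting_to[OF finite_carrier subgroup_H _ assms(2)] Q \<open>\<phi> \<in> Q\<close> by auto
  qed
  finally show ?thesis by (simp add: sum_distrib_left)
qed

lemma same_column_sums_extended_iff:
  assumes g: "g \<in> carrier G" and h: "h \<in> carrier G"
  shows "(\<forall>Q'\<in>dual_part G P'. (\<Sum>\<chi>\<in>Q'. \<chi> h) = (\<Sum>\<chi>\<in>Q'. \<chi> g)) \<longleftrightarrow>
     (h \<in> H \<longleftrightarrow> g \<in> H) \<and>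
     (g \<in> H \<longrightarrow> (\<forall>Q\<in>dual_part GH P - {{\<epsilon>H}}. (\<Sum>\<phi>\<in>Q. \<phi> h) = (\<Sum>\<phi>\<in>Q. \<phi> g)))"
    (is "?L \<longleftrightarrow> ?R")
proof
  assume L: ?L
  have card_ann: "(of_nat (card ann) :: complex) \<noteq> 0"
    using finite_annihilator principal_in_annihilator by auto
  have "ann - {\<epsilon>} \<in> dual_part G P'"
    using dual_part_extended annihilator_nontrivial by auto
  then have "(\<Sum>\<chi>\<in>ann - {\<epsilon>}. \<chi> h) = (\<Sum>\<chi>\<in>ann - {\<epsilon>}. \<chi> g)" using L by blast
  then have HH: "h \<in> H \<longleftrightarrow> g \<in> H"
    using sum_annihilator_minus_principal[OF g] sum_annihilator_minus_principal[OF h] card_ann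
    by (auto split: if_splits)
  moreover have "(\<Sum>\<phi>\<in>Q. \<phi> h) = (\<Sum>\<phi>\<in>Q. \<phi> g)" if "g \<in> H" "Q \<in> dual_part GH P - {{\<epsilon>H}}" for Q
  proof -
    have "lift_block G H Q \<in> dual_part G P'"
      using dual_part_extended lift_block_nonempty[OF that(2)] that(2) by auto
    then have "(\<Sum>\<chi>\<in>lift_block G H Q. \<chi> h) = (\<Sum>\<chi>\<in>lift_block G H Q. \<chi> g)" using L by blast
    then show ?thesis
      using sum_lift_block[OF that(2) g] sum_lift_block[OF that(2) h] that(1) HH card_ann by simp
  qed
  ultimately show ?R by blast
next
  assume R: ?R
  show ?L
  proof
    fix Q' assume "Q' \<in> dual_part G P'"
    then consider "Q' = ann - {\<epsilon>}" | "Q' = {\<epsilon>}"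
      | Q where "Q \<in> dual_part GH P - {{\<epsilon>H}}" "Q' = lift_block G H Q"
      using dual_part_extended by blast
    then show "(\<Sum>\<chi>\<in>Q'. \<chi> h) = (\<Sum>\<chi>\<in>Q'. \<chi> g)"
    proof cases
      case 1
      then show ?thesis
        using sum_annihilator_minus_principal[OF g] sum_annihilator_minus_principal[OF h] R by simp
    next
      case 2
      then show ?thesis using g h by (simp add: principal_def)
    next
      case 3
      then show ?thesis using sum_lift_block[OF 3(1) g] sum_lift_block[OF 3(1) h] R by auto
    qed
  qed
qed

lemma reflexive_extended:
  assumes "reflexive_part GH P" shows "reflexive_part G P'"
proof -
  define C where "C g = {h \<in> carrier G. \<forall>Q'\<in>dual_part G P'. (\<Sum>\<chi>\<in>Q'. \<chi> h) = (\<Sum>\<chi>\<in>Q'. \<chi> g)}" for g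
  define C\<^sub>H where "C\<^sub>H g = {h \<in> H. \<forall>Q\<in>dual_part GH P. (\<Sum>\<phi>\<in>Q. \<phi> h) = (\<Sum>\<phi>\<in>Q. \<phi> g)}" for g
  have "C\<^sub>H ` H = P" using assms by (simp add: reflexive_part_def bidual_part_def C\<^sub>H_def)
  have C_outside: "C g = D" if "g \<in> D" for g
    using same_column_sums_extended_iff[of g] that by (auto simp: C_def)
  have C_inside: "C g = C\<^sub>H g" if g: "g \<in> H" for g
  proof -
    have "(\<Sum>\<phi>\<in>{\<epsilon>H}. \<phi> x) = 1" if "x \<in> H" for x using that by simp
    then have "(\<forall>Q\<in>dual_part GH P. (\<Sum>\<phi>\<in>Q. \<phi> h) = (\<Sum>\<phi>\<in>Q. \<phi> g)) \<longleftrightarrow>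
          (\<forall>Q\<in>dual_part GH P - {{\<epsilon>H}}. (\<Sum>\<phi>\<in>Q. \<phi> h) = (\<Sum>\<phi>\<in>Q. \<phi> g))" if "h \<in> H" for h
      using that g by auto
    moreover have "g \<in> carrier G" using g H_subset by blast
    ultimately have "h \<in> C g \<longleftrightarrow> h \<in> C\<^sub>H g" for h
      using same_column_sums_extended_iff[of g h] g H_subset by (auto simp: C_def C\<^sub>H_def)
    then show ?thesis by blast
  qed
  have "D \<noteq> {}" using H_subset proper_subgroup by blast
  have "bidual_part G P' = C ` (D \<union> H)"
    using H_subset by (simp add: bidual_part_def C_def Un_absorb2)
  also have "\<dots> = C ` D \<union> C ` H" by (rule image_Un)
  also have "C ` D = {D}" using C_outside \<open>D \<noteq> {}\<close> by auto
  also have "C ` H = C\<^sub>H ` H" using C_inside by simp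
  finally show ?thesis using \<open>C\<^sub>H ` H = P\<close> by (simp add: reflexive_part_def)
qed

end

theorem proposition2p12:
  fixes G :: "('a, 'b) monoid_scheme" and H :: "'a set" and P :: "'a set set"
  assumes "comm_group G" and "finite (carrier G)"
    and "subgroup H G" and "H \<noteq> carrier G"
    and "partition_on H P"
  shows
    "(dual_part G (insert (carrier G - H) P) =
       ({annihilator G H - {principal G}} - {{}})
       \<union> {{principal G}}
       \<union> ((\<lambda>Q. lift_block G H Q) ` (dual_part (G\<lparr>carrier := H\<rparr>) P - {{principal (G\<lparr>carrier := H\<rparr>)}}) - {{}}))
  \<and> (annihilator G H - {principal G} \<noteq> {} \<longrightarrow>
       kraw (annihilator G H - {principal G}) (carrier G - H) = - of_nat (card H)
       \<and> (\<forall>B\<in>P. kraw (annihilator G H - {principal G}) B = of_nat (card B)))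
  \<and> (kraw {principal G} (carrier G - H) = of_nat (card (carrier G - H))
     \<and> (\<forall>B\<in>P. kraw {principal G} B = kraw {principal (G\<lparr>carrier := H\<rparr>)} B))
  \<and> (\<forall>Q\<in>dual_part (G\<lparr>carrier := H\<rparr>) P - {{principal (G\<lparr>carrier := H\<rparr>)}}.
       lift_block G H Q \<noteq> {} \<longrightarrow>
         kraw (lift_block G H Q) (carrier G - H) = 0
         \<and> (\<forall>B\<in>P. kraw (lift_block G H Q) B = kraw Q B))
  \<and> (reflexive_part (G\<lparr>carrier := H\<rparr>) P \<longrightarrow>
       reflexive_part G (insert (carrier G - H) P))"
proof -
  interpret subgroup_partition G H P
    using assms by (simp add: subgroup_partition_def subgroup_partition_axioms_def)
  show ?thesis
    using dual_part_extended kraw_annihilator_block kraw_principal_block kraw_lift_block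
      reflexive_extended by blast
qed

end
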